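(* Let $\lambda>0$, $n_{\rm eff}>1$, $D_1>0$ and $D_2\ge 0$ be real numbers, and let $n\ge 1$ be an integer. Define $f(x)=\left(x^2+D_1\right)^{1/2}+n_{\rm eff}\,(x+D_2)$, let $\delta=f(0)\bmod\lambda\in[0,\lambda)$, and set $$k_n^*=\frac{f(0)-\delta}{\lambda}+\left\lceil \frac{\delta}{\lambda}\right\rceil+(n-1).$$ If $\Delta^*\ge 0$ is a real number satisfying $\left((\Delta^* )^2+D_1\right)^{1/2}+n_{\rm eff}\,(D_2+\Delta^* )=k_n^*\lambda$, then $\Delta^*<n\lambda$.
   Context: This arises in placing the $n$-th pinching antenna on a dielectric waveguide: $\lambda$ is the carrier wavelength, $n_{\rm eff}$ the effective refractive index of the waveguide, $D_1=y_m^2+d^2$ (with $d>0$ the waveguide height and $(x_m,y_m,0)$ the user location), $D_2=L+x_m\ge 0$, and $\Delta^*$ is the (nonnegative) offset of the antenna from the point on the waveguide closest to the user. $\lceil a\rceil$ denotes the ceiling of $a$. *)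

theory Defs
  imports Complex_Main
begin

definition real_mod :: "real \<Rightarrow> real \<Rightarrow> real" where
  "real_mod a b = a - b * real_of_int \<lfloor>a / b\<rfloor>"

end

theory Submission
  imports Defs
begin

text \<open>The target phase \<open>k\<^sub>n\<^sup>* \<lambda>\<close> exceeds \<open>f 0\<close> by less than \<open>n \<lambda>\<close>, because rounding
  \<open>\<delta>/\<lambda>\<close> up adds less than one wavelength; on the other hand \<open>f\<close> grows at least with
  slope \<open>n\<^sub>e\<^sub>f\<^sub>f > 1\<close> on \<open>[0, \<infinity>)\<close>, so \<open>f \<Delta>\<^sup>* - f 0 \<ge> \<Delta>\<^sup>*\<close>. The value of \<open>\<delta>\<close> plays no role.\<close>

lemma ceiling_divide_mult_less:
  fixes x lam :: real
  assumes "lam > 0"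
  shows "of_int \<lceil>x / lam\<rceil> * lam < x + lam"
proof -
  have "of_int \<lceil>x / lam\<rceil> < x / lam + 1"
    by linarith
  then show ?thesis
    using assms by (simp add: field_simps)
qed

theorem proposition2:
  fixes lam neff D1 D2 Delta :: real and n :: nat
    and f :: "real \<Rightarrow> real" and delta kn :: real
  assumes "lam > 0" and "neff > 1" and "D1 > 0" and "D2 \<ge> 0" and "n \<ge> 1"
    and f_def: "\<And>x. f x = sqrt (x^2 + D1) + neff * (x + D2)"
    and delta_def: "delta = real_mod (f 0) lam"
    and kn_def: "kn = (f 0 - delta) / lam + real_of_int \<lceil>delta / lam\<rceil> + (real n - 1)"
    and "Delta \<ge> 0"
    and "sqrt (Delta^2 + D1) + neff * (D2 + Delta) = kn * lam"
  shows "Delta < real n * lam"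
proof -
  have "kn * lam = f 0 - delta + real_of_int \<lceil>delta / lam\<rceil> * lam + (real n - 1) * lam"
    using \<open>lam > 0\<close> unfolding kn_def by (simp add: field_simps)
  also have "\<dots> < f 0 + real n * lam"
    using ceiling_divide_mult_less[OF \<open>lam > 0\<close>, of delta] by (simp add: algebra_simps)
  finally have phase_bound: "kn * lam < f 0 + real n * lam" .
  have sqrt_growth: "sqrt D1 \<le> sqrt (Delta^2 + D1)"
    by simp
  have "Delta \<le> neff * Delta"
    using \<open>neff > 1\<close> \<open>Delta \<ge> 0\<close> mult_right_mono[of 1 neff Delta] by simp
  also have "\<dots> \<le> sqrt (Delta^2 + D1) + neff * (D2 + Delta) - f 0"
    using sqrt_growth by (simp add: f_def algebra_simps)
  finally show ?thesis
    using phase_bound \<open>sqrt (Delta^2 + D1) + neff * (D2 + Delta) = kn * lam\<close> by linarith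
qed

end
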